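(* Let $E$ be a finite nonempty set, $X\in\mathcal{X}(2)\setminus\mathcal{X}^*(2)$, and let $f:2^E\to\mathbb{N}$ and $S,T\subseteq E$ satisfy: $X=\mathbb{B}_f(2)$; for every $U\subseteq E$ there is $\vec x\in\mathbb{B}_f(2)$ with $x(U)=f(U)$; and $f(S)=f(T)=f(S\cap T)=1$, $f(S\cup T)=2$. Then there are four distinct elements $e_1,e_2,e_3,e_4\in E$ and two vectors $\vec x,\vec y\in\mathbb{B}_f(2)$ such that: (1) $x(e_1)=x(e_2)=1$ with $e_1\in E\setminus(S\cup T)$ and $e_2\in S\cap T$; (2) $y(e_3)=y(e_4)=1$ with $e_3\in S\setminus T$ and $e_4\in T\setminus S$; (3) every $\vec z\in\mathbb{B}_f(2)\setminus\{\vec x,\vec y\}$ with $\mathrm{supp}(\vec z)\subseteq\{e_1,e_2,e_3,e_4\}$ satisfies $\mathrm{supp}(\vec z)\in\{\{e_1,e_3\},\{e_1,e_4\},\{e_1\}\}$.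
   Context: $\mathbb{N}=\{0,1,2,\dots\}$; $x(U)=\sum_{e\in U}x_e$, $x(e)=x_e$; $\mathrm{supp}(\vec x)=\{e: x_e\neq0\}$. For $f:2^E\to\mathbb{N}$, $\mathbb{B}_f(d)=\{\vec x\in\mathbb{N}^E: x(U)\le f(U)\ \forall U\subseteq E,\ x(E)=d\}$. $f$ is strictly positive if $f(U)>0$ for all nonempty $U$, normalized if $f(\emptyset)=0$, monotonic if $f(U)\le f(V)$ for $U\subseteq V$. $\mathcal{X}(d)=\{\mathbb{B}_f(d): f \text{ strictly positive, normalized, monotonic}\}$, $\mathcal{X}^*(d)=\{\mathbb{B}_f(d): f\text{ strictly positive, normalized, monotonic, submodular}\}$. *)

theory Defs
  imports Main
begin

text \<open>Vectors in N^E are modelled as functions 'a => nat vanishing outside E.\<close>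

definition vec_sum :: "('a \<Rightarrow> nat) \<Rightarrow> 'a set \<Rightarrow> nat" where
  "vec_sum x U = (\<Sum>e\<in>U. x e)"

definition supp :: "'a set \<Rightarrow> ('a \<Rightarrow> nat) \<Rightarrow> 'a set" where
  "supp E x = {e \<in> E. x e \<noteq> 0}"

definition polymat_B :: "'a set \<Rightarrow> ('a set \<Rightarrow> nat) \<Rightarrow> nat \<Rightarrow> ('a \<Rightarrow> nat) set" where
  "polymat_B E f d = {x. (\<forall>e. e \<notin> E \<longrightarrow> x e = 0)
      \<and> (\<forall>U. U \<subseteq> E \<longrightarrow> vec_sum x U \<le> f U) \<and> vec_sum x E = d}"

definition strictly_positive :: "'a set \<Rightarrow> ('a set \<Rightarrow> nat) \<Rightarrow> bool" where
  "strictly_positive E f = (\<forall>U. U \<subseteq> E \<longrightarrow> U \<noteq> {} \<longrightarrow> f U > 0)"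

definition normalized :: "('a set \<Rightarrow> nat) \<Rightarrow> bool" where
  "normalized f = (f {} = 0)"

definition monotonic :: "'a set \<Rightarrow> ('a set \<Rightarrow> nat) \<Rightarrow> bool" where
  "monotonic E f = (\<forall>U V. U \<subseteq> V \<longrightarrow> V \<subseteq> E \<longrightarrow> f U \<le> f V)"

definition submodular :: "'a set \<Rightarrow> ('a set \<Rightarrow> nat) \<Rightarrow> bool" where
  "submodular E f = (\<forall>U V. U \<subseteq> E \<longrightarrow> V \<subseteq> E \<longrightarrow>
      f (U \<union> V) + f (U \<inter> V) \<le> f U + f V)"

definition calX :: "'a set \<Rightarrow> nat \<Rightarrow> ('a \<Rightarrow> nat) set set" where
  "calX E d = {polymat_B E f d | f. strictly_positive E f \<and> normalized f \<and> monotonic E f}"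

definition calX_star :: "'a set \<Rightarrow> nat \<Rightarrow> ('a \<Rightarrow> nat) set set" where
  "calX_star E d = {polymat_B E f d | f. strictly_positive E f \<and> normalized f
      \<and> monotonic E f \<and> submodular E f}"

end

theory Submission
  imports Defs
begin

text \<open>The vector attaining f(S \<union> T) = 2 can put at most one unit on S and one on T, hence
one unit on each of S - T and T - S. The vector attaining f(S \<inter> T) = 1 puts its unit of S
inside S \<inter> T, so S \<union> T carries only that unit and the other lies outside S \<union> T. Any other
vector of total 2 supported on these four elements has coordinates bounded by
z e2 + z e3 \<le> f S and z e2 + z e4 \<le> f T, and a vector with two unit coordinates is
determined by them; this leaves exactly the supports {e1, e3}, {e1, e4} and {e1}.\<close>

lemma polymat_B_sum_le: "x \<in> polymat_B E f d \<Longrightarrow> U \<subseteq> E \<Longrightarrow> sum x U \<le> f U"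
  by (simp add: polymat_B_def vec_sum_def)

lemma polymat_B_sum_total: "x \<in> polymat_B E f d \<Longrightarrow> sum x E = d"
  by (simp add: polymat_B_def vec_sum_def)

lemma polymat_B_outside: "x \<in> polymat_B E f d \<Longrightarrow> e \<notin> E \<Longrightarrow> x e = 0"
  by (simp add: polymat_B_def)

lemma polymat_B_sum_supp:
  assumes "finite E" "x \<in> polymat_B E f d" "supp E x \<subseteq> A" "A \<subseteq> E"
  shows "sum x A = d"
proof -
  have "sum x A = sum x E"
    using assms by (intro sum.mono_neutral_left) (auto simp: supp_def)
  with polymat_B_sum_total[OF assms(2)] show ?thesis by simp
qed

lemma polymat_B_two_units_eq:
  assumes "finite E" "x \<in> polymat_B E f 2" "z \<in> polymat_B E f 2"
    and "a \<in> E" "b \<in> E" "a \<noteq> b"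
    and "x a = 1" "x b = 1" "z a = 1" "z b = 1"
  shows "x = z"
proof -
  have vanish: "w e = 0" if w: "w \<in> polymat_B E f 2" "w a = 1" "w b = 1" and e: "e \<notin> {a, b}"
    for w e
  proof (cases "e \<in> E")
    case True
    have "sum w E = sum w (E - {a, b}) + sum w {a, b}"
      using assms(1,4,5) by (metis add.commute empty_subsetI insert_subset sum.subset_diff)
    with polymat_B_sum_total[OF w(1)] w(2,3) \<open>a \<noteq> b\<close> have "sum w (E - {a, b}) = 0"
      by simp
    with assms(1) True e show ?thesis by simp
  qed (use polymat_B_outside[OF w(1)] in simp)
  show ?thesis
  proof
    fix e
    show "x e = z e"
      using vanish[OF assms(2,7,8), of e] vanish[OF assms(3,9,10), of e] assms(7-10)
      by (cases "e \<in> {a, b}") auto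
  qed
qed

context
  fixes E :: "'a set" and f :: "'a set \<Rightarrow> nat" and S T :: "'a set"
  assumes finite_E: "finite E" and S_sub: "S \<subseteq> E" and T_sub: "T \<subseteq> E"
    and f_S: "f S = 1" and f_T: "f T = 1"
begin

lemma finite_S: "finite S" and finite_T: "finite T"
  using finite_E S_sub T_sub finite_subset by auto

lemma polymat_B_sum_S_le: "x \<in> polymat_B E f d \<Longrightarrow> sum x S \<le> 1"
  and polymat_B_sum_T_le: "x \<in> polymat_B E f d \<Longrightarrow> sum x T \<le> 1"
  using polymat_B_sum_le S_sub T_sub f_S f_T by metis+

lemma units_in_sym_diff:
  assumes y: "y \<in> polymat_B E f d" and tight: "sum y (S \<union> T) = 2"
  obtains e3 e4 where "e3 \<in> S - T" "e4 \<in> T - S" "y e3 = 1" "y e4 = 1"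
proof -
  have "sum y S = sum y (S \<inter> T) + sum y (S - T)" "sum y T = sum y (S \<inter> T) + sum y (T - S)"
    using finite_S finite_T sum.Int_Diff by (metis, metis Int_commute)
  moreover have "sum y (S \<union> T) = sum y (S - T) + sum y (T - S) + sum y (S \<inter> T)"
    using finite_S finite_T by (rule sum.union_diff2)
  ultimately have "sum y (S - T) = 1" "sum y (T - S) = 1"
    using tight polymat_B_sum_S_le[OF y] polymat_B_sum_T_le[OF y] by linarith+
  then obtain e3 e4 where "e3 \<in> S - T" "e4 \<in> T - S" "y e3 = 1" "y e4 = 1"
    using finite_S finite_T sum_eq_1_iff[of "S - T" y] sum_eq_1_iff[of "T - S" y] by auto
  with that show ?thesis .
qed

lemma units_outside_and_in_inter:
  assumes x: "x \<in> polymat_B E f 2" and tight: "sum x (S \<inter> T) = 1"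
  obtains e1 e2 where "e1 \<in> E - (S \<union> T)" "e2 \<in> S \<inter> T" "x e1 = 1" "x e2 = 1"
proof -
  have "sum x (S \<union> T) + sum x (S \<inter> T) = sum x S + sum x T"
    using finite_S finite_T by (rule sum.union_inter)
  moreover have "sum x (S \<inter> T) \<le> sum x (S \<union> T)"
    using finite_S finite_T by (intro sum_mono2) auto
  ultimately have "sum x (S \<union> T) = 1"
    using tight polymat_B_sum_S_le[OF x] polymat_B_sum_T_le[OF x] by linarith
  moreover have "sum x E = sum x (E - (S \<union> T)) + sum x (S \<union> T)"
    using finite_E S_sub T_sub by (metis add.commute le_sup_iff sum.subset_diff)
  ultimately have "sum x (E - (S \<union> T)) = 1"
    using polymat_B_sum_total[OF x] by simp
  then obtain e1 e2 where "e1 \<in> E - (S \<union> T)" "e2 \<in> S \<inter> T" "x e1 = 1" "x e2 = 1"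
    using finite_E finite_S tight sum_eq_1_iff[of "E - (S \<union> T)" x] sum_eq_1_iff[of "S \<inter> T" x]
    by auto
  with that show ?thesis .
qed

lemma supp_classification:
  assumes e: "e1 \<in> E - (S \<union> T)" "e2 \<in> S \<inter> T" "e3 \<in> S - T" "e4 \<in> T - S"
    and x: "x \<in> polymat_B E f 2" "x e1 = 1" "x e2 = 1"
    and y: "y \<in> polymat_B E f 2" "y e3 = 1" "y e4 = 1"
    and z: "z \<in> polymat_B E f 2" "z \<noteq> x" "z \<noteq> y" "supp E z \<subseteq> {e1, e2, e3, e4}"
  shows "supp E z \<in> {{e1, e3}, {e1, e4}, {e1}}"
proof -
  have in_E: "{e1, e2, e3, e4} \<subseteq> E" using e S_sub T_sub by auto
  have distinct: "distinct [e1, e2, e3, e4]" using e by auto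
  have total: "z e1 + z e2 + z e3 + z e4 = 2"
    using polymat_B_sum_supp[OF finite_E z(1) z(4) in_E] distinct by simp
  have "z e2 + z e3 = sum z {e2, e3}" using distinct by simp
  also have "\<dots> \<le> sum z S" using finite_S e by (intro sum_mono2) auto
  finally have bound_S: "z e2 + z e3 \<le> 1" using polymat_B_sum_S_le[OF z(1)] by simp
  have "z e2 + z e4 = sum z {e2, e4}" using distinct by simp
  also have "\<dots> \<le> sum z T" using finite_T e by (intro sum_mono2) auto
  finally have bound_T: "z e2 + z e4 \<le> 1" using polymat_B_sum_T_le[OF z(1)] by simp
  have not_x: "\<not> (z e1 = 1 \<and> z e2 = 1)"
    using polymat_B_two_units_eq[OF finite_E x(1) z(1)] x(2,3) z(2) in_E distinct by auto
  have not_y: "\<not> (z e3 = 1 \<and> z e4 = 1)"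
    using polymat_B_two_units_eq[OF finite_E y(1) z(1)] y(2,3) z(3) in_E distinct by auto
  have "z e2 = 0" using total bound_S bound_T not_x by linarith
  have supp_z: "supp E z = {e \<in> {e1, e2, e3, e4}. z e \<noteq> 0}"
    using z(4) in_E by (auto simp: supp_def)
  consider "z e1 = 1" "z e3 = 1" "z e4 = 0" | "z e1 = 1" "z e3 = 0" "z e4 = 1"
    | "z e1 = 2" "z e3 = 0" "z e4 = 0"
    using total bound_S bound_T not_y \<open>z e2 = 0\<close> by fastforce
  then show ?thesis
    by cases (use \<open>z e2 = 0\<close> distinct in \<open>auto simp: supp_z\<close>)
qed

end

theorem lemma6p3:
  fixes E :: "'a set" and X :: "('a \<Rightarrow> nat) set" and f :: "'a set \<Rightarrow> nat"
    and S T :: "'a set"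
  assumes "finite E" and "E \<noteq> {}"
    and "X \<in> calX E 2 - calX_star E 2"
    and "X = polymat_B E f 2"
    and "\<forall>U. U \<subseteq> E \<longrightarrow> (\<exists>x \<in> polymat_B E f 2. vec_sum x U = f U)"
    and "S \<subseteq> E" and "T \<subseteq> E"
    and "f S = 1" and "f T = 1" and "f (S \<inter> T) = 1" and "f (S \<union> T) = 2"
  shows "\<exists>e1 e2 e3 e4 x y.
      e1 \<in> E \<and> e2 \<in> E \<and> e3 \<in> E \<and> e4 \<in> E \<and> distinct [e1, e2, e3, e4] \<and>
      x \<in> polymat_B E f 2 \<and> y \<in> polymat_B E f 2 \<and>
      x e1 = 1 \<and> x e2 = 1 \<and> e1 \<in> E - (S \<union> T) \<and> e2 \<in> S \<inter> T \<and>
      y e3 = 1 \<and> y e4 = 1 \<and> e3 \<in> S - T \<and> e4 \<in> T - S \<and>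
      (\<forall>z \<in> polymat_B E f 2 - {x, y}. supp E z \<subseteq> {e1, e2, e3, e4} \<longrightarrow>
         supp E z \<in> {{e1, e3}, {e1, e4}, {e1}})"
proof -
  note setting = assms(1,6,7,8,9)
  obtain y where y: "y \<in> polymat_B E f 2" "sum y (S \<union> T) = 2"
    using assms(5-7,11) by (metis Un_subset_iff vec_sum_def)
  obtain e3 e4 where e34: "e3 \<in> S - T" "e4 \<in> T - S" "y e3 = 1" "y e4 = 1"
    using units_in_sym_diff[OF setting y] .
  obtain x where x: "x \<in> polymat_B E f 2" "sum x (S \<inter> T) = 1"
    using assms(5,6,10) by (metis inf.coboundedI1 vec_sum_def)
  obtain e1 e2 where e12: "e1 \<in> E - (S \<union> T)" "e2 \<in> S \<inter> T" "x e1 = 1" "x e2 = 1"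
    using units_outside_and_in_inter[OF setting x] .
  have "\<forall>z \<in> polymat_B E f 2 - {x, y}. supp E z \<subseteq> {e1, e2, e3, e4} \<longrightarrow>
      supp E z \<in> {{e1, e3}, {e1, e4}, {e1}}"
    using supp_classification[OF setting e12(1,2) e34(1,2) x(1) e12(3,4) y(1) e34(3,4)] by blast
  moreover have "e1 \<in> E" "e2 \<in> E" "e3 \<in> E" "e4 \<in> E" "distinct [e1, e2, e3, e4]"
    using e12 e34 assms(6,7) by auto
  ultimately show ?thesis
    using e12 e34 x(1) y(1) by blast
qed

end
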